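(* Let $k$ be a field, $R=k[x_0,\ldots,x_n]$, and let $I \subset R$ be a homogeneous Gorenstein ideal of height three that is not a complete intersection, with Buchsbaum–Eisenbud matrix $M$. Let $i,j,k$ be distinct indices and let $f,g,h \in I$ be the Pfaffians of the matrices obtained from $M$ by deleting row and column $i$, $j$, and $k$, respectively, and assume $f,g,h$ is a regular sequence. Then \[(f, g, h) : I = (f, g, h, u),\] where $u$ is the Pfaffian of the matrix obtained from $M$ by deleting rows and columns $i, j, k$.
   Context: By the Buchsbaum–Eisenbud structure theorem, a homogeneous Gorenstein ideal $I$ of height three has a minimal graded free resolution $0\to R(-t)\to F^*(-t)\to F\to I\to 0$ with $F$ free of odd rank $s$, where the middle map is given by an $s\times s$ skew-symmetric matrix $M$ of homogeneous forms with zero diagonal and all entries in the homogeneous maximal ideal; the Buchsbaum–Eisenbud matrix of $I$ is this $M$, and the $i$-th minimal generator of $I$ is the Pfaffian of the matrix obtained from $M$ by deleting row and column $i$. $I$ is a complete intersection iff $s=3$. *)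

theory Defs
  imports "HOL-Library.Poly_Mapping" "HOL-Library.Extended_Nat"
begin

text \<open>Multivariate polynomials over a field: monomials are finitely supported
exponent vectors, polynomials are finitely supported coefficient
functions on monomials (the library ring structure is convolution).
The ring R = k[x_0,...,x_n] is the subring Rn n of polynomials only involving
the variables x_0,...,x_n.\<close>

type_synonym 'k mpoly = "(nat \<Rightarrow>\<^sub>0 nat) \<Rightarrow>\<^sub>0 'k"

definition Rn :: "nat \<Rightarrow> 'k::field mpoly set" where
  "Rn n = {p :: 'k mpoly. \<forall>m\<in>Poly_Mapping.keys p. Poly_Mapping.keys m \<subseteq> {..n}}"

definition tdeg :: "(nat \<Rightarrow>\<^sub>0 nat) \<Rightarrow> nat" where
  "tdeg m = (\<Sum>v\<in>Poly_Mapping.keys m. Poly_Mapping.lookup m v)"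

definition homogeneous_of_deg :: "nat \<Rightarrow> 'k::field mpoly \<Rightarrow> bool" where
  "homogeneous_of_deg d p \<longleftrightarrow> (\<forall>m\<in>Poly_Mapping.keys p. tdeg m = d)"

definition hcomp :: "nat \<Rightarrow> 'k::field mpoly \<Rightarrow> 'k mpoly" where
  "hcomp d p = Abs_poly_mapping (\<lambda>m. if tdeg m = d then Poly_Mapping.lookup p m else 0)"

definition homogeneous_ideal :: "'k::field mpoly set \<Rightarrow> bool" where
  "homogeneous_ideal I \<longleftrightarrow> (\<forall>p\<in>I. \<forall>d. hcomp d p \<in> I)"

definition ideal_gen :: "nat \<Rightarrow> 'k::field mpoly set \<Rightarrow> 'k mpoly set" where
  "ideal_gen n S = {p. \<exists>F c. finite F \<and> F \<subseteq> S \<and> (\<forall>g\<in>F. c g \<in> Rn n)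
                          \<and> p = (\<Sum>g\<in>F. c g * g)}"

definition is_ideal :: "nat \<Rightarrow> 'k::field mpoly set \<Rightarrow> bool" where
  "is_ideal n I \<longleftrightarrow> I \<subseteq> Rn n \<and> 0 \<in> I \<and> (\<forall>a\<in>I. \<forall>b\<in>I. a + b \<in> I)
      \<and> (\<forall>r\<in>Rn n. \<forall>a\<in>I. r * a \<in> I)"

definition is_prime :: "nat \<Rightarrow> 'k::field mpoly set \<Rightarrow> bool" where
  "is_prime n P \<longleftrightarrow> is_ideal n P \<and> P \<noteq> Rn n
      \<and> (\<forall>a\<in>Rn n. \<forall>b\<in>Rn n. a * b \<in> P \<longrightarrow> a \<in> P \<or> b \<in> P)"

definition prime_height :: "nat \<Rightarrow> 'k::field mpoly set \<Rightarrow> enat" where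
  "prime_height n P = Sup {enat (length c - 1) | c. c \<noteq> [] \<and> sorted_wrt (\<subset>) c
       \<and> (\<forall>Q\<in>set c. is_prime n Q) \<and> last c = P}"

definition ideal_height :: "nat \<Rightarrow> 'k::field mpoly set \<Rightarrow> enat" where
  "ideal_height n I = Inf {prime_height n P | P. is_prime n P \<and> I \<subseteq> P}"

definition colon :: "nat \<Rightarrow> 'k::field mpoly set \<Rightarrow> 'k mpoly set \<Rightarrow> 'k mpoly set" where
  "colon n J I = {r \<in> Rn n. \<forall>a\<in>I. r * a \<in> J}"

definition regular_seq :: "nat \<Rightarrow> 'k::field mpoly list \<Rightarrow> bool" where
  "regular_seq n xs \<longleftrightarrow> set xs \<subseteq> Rn n \<and> ideal_gen n (set xs) \<noteq> Rn n
     \<and> (\<forall>i<length xs. \<forall>r\<in>Rn n. r * xs ! i \<in> ideal_gen n (set (take i xs))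
                                   \<longrightarrow> r \<in> ideal_gen n (set (take i xs)))"

definition complete_intersection :: "nat \<Rightarrow> 'k::field mpoly set \<Rightarrow> bool" where
  "complete_intersection n I \<longleftrightarrow> (\<exists>xs. regular_seq n xs \<and> I = ideal_gen n (set xs))"

text \<open>Pfaffian of the principal submatrix of M on the (increasing) index list,
by expansion along the first row; it is 0 for odd size, 1 for the empty matrix.\<close>
fun pf :: "(nat \<Rightarrow> nat \<Rightarrow> 'a::comm_ring_1) \<Rightarrow> nat list \<Rightarrow> 'a" where
  "pf M [] = 1"
| "pf M (i # rest) = (\<Sum>p<length rest.
      (-1) ^ p * M i (rest ! p) * pf M (take p rest @ drop (Suc p) rest))"

definition pf_del :: "nat \<Rightarrow> (nat \<Rightarrow> nat \<Rightarrow> 'a::comm_ring_1) \<Rightarrow> nat set \<Rightarrow> 'a" where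
  "pf_del s M D = pf M (filter (\<lambda>i. i \<notin> D) [0..<s])"

text \<open>free module R^s (vectors indexed by i < s, zero beyond)\<close>
definition Vn :: "nat \<Rightarrow> nat \<Rightarrow> (nat \<Rightarrow> 'k::field mpoly) set" where
  "Vn n s = {v. (\<forall>i<s. v i \<in> Rn n) \<and> (\<forall>i\<ge>s. v i = 0)}"

definition mat_vec :: "nat \<Rightarrow> (nat \<Rightarrow> nat \<Rightarrow> 'a::comm_ring_1) \<Rightarrow> (nat \<Rightarrow> 'a) \<Rightarrow> nat \<Rightarrow> 'a" where
  "mat_vec s M v = (\<lambda>i. if i < s then (\<Sum>j<s. M i j * v j) else 0)"

text \<open>signed Pfaffian vector (the maps F \<rightarrow> I and R(-t) \<rightarrow> F^*(-t))\<close>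
definition pfvec :: "nat \<Rightarrow> (nat \<Rightarrow> nat \<Rightarrow> 'a::comm_ring_1) \<Rightarrow> nat \<Rightarrow> 'a" where
  "pfvec s M i = (if i < s then (-1) ^ i * pf_del s M {i} else 0)"

text \<open>M is the Buchsbaum-Eisenbud matrix of I: M is an s x s (s odd) skew-symmetric
matrix with zero diagonal, homogeneous entries (compatible with a grading
F = \<Oplus> R(-a_i), twist t) lying in the homogeneous maximal ideal, and
0 \<rightarrow> R(-t) \<rightarrow> F^*(-t) \<rightarrow> F \<rightarrow> I \<rightarrow> 0 (maps: Pfaffian vector, M, Pfaffian vector)
is exact, i.e. a minimal graded free resolution of I.\<close>
definition BE_matrix :: "nat \<Rightarrow> 'k::field mpoly set \<Rightarrow> nat \<Rightarrow> (nat \<Rightarrow> nat \<Rightarrow> 'k mpoly) \<Rightarrow> bool" where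
  "BE_matrix n I s M \<longleftrightarrow> odd s
    \<and> (\<forall>i<s. \<forall>j<s. M i j \<in> Rn n \<and> M j i = - M i j \<and> Poly_Mapping.lookup (M i j) 0 = 0)
    \<and> (\<forall>i<s. M i i = 0)
    \<and> (\<exists>(a::nat \<Rightarrow> int) (t::int). \<forall>i<s. \<forall>j<s. M i j \<noteq> 0 \<longrightarrow>
           t - a i - a j \<ge> 0 \<and> homogeneous_of_deg (nat (t - a i - a j)) (M i j))
    \<and> I = {(\<Sum>i<s. pfvec s M i * v i) | v. v \<in> Vn n s}
    \<and> {v \<in> Vn n s. (\<Sum>i<s. pfvec s M i * v i) = 0} = {mat_vec s M w | w. w \<in> Vn n s}
    \<and> {v \<in> Vn n s. (\<forall>i. mat_vec s M v i = 0)} = {(\<lambda>i. r * pfvec s M i) | r. r \<in> Rn n}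
    \<and> (\<forall>r\<in>Rn n. (\<forall>i<s. r * pfvec s M i = 0) \<longrightarrow> r = 0)"

definition gorenstein_ht3_BE :: "nat \<Rightarrow> 'k::field mpoly set \<Rightarrow> nat \<Rightarrow> (nat \<Rightarrow> nat \<Rightarrow> 'k mpoly) \<Rightarrow> bool" where
  "gorenstein_ht3_BE n I s M \<longleftrightarrow> is_ideal n I \<and> homogeneous_ideal I
     \<and> ideal_height n I = 3 \<and> BE_matrix n I s M"

end

theory Submission
  imports Defs
begin

text \<open>
  Let p be the signed Pfaffian vector and q_l the Pfaffian of M with row and column l deleted,
  so that f, g, h are up to sign the entries i, j, k of p; let J = (f, g, h). Expanding Pfaffians
  along an added row gives, for each pair a, b, a vector W_ab whose entries are up to sign the
  Pfaffians with rows and columns a, b, c deleted, such that M W_ab = (-1)^a q_b e_a - (-1)^b q_a e_b.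
  Thus the W_ab lift the Koszul syzygies of f, g, h to the resolution of I, and
  h W_ij - g W_ik + f W_jk lies in ker M = R p; comparing entries i, it equals u p up to sign.
  This gives u I \<subseteq> J.

  Conversely, if r I \<subseteq> J, write r p_l = b_l h modulo (f, g). Since M p = 0 and h is regular
  modulo (f, g), the entries of M b are y_m f + z_m g. Pairing b with M p and with the M W_ab,
  and using that g is regular modulo f, determines the z-parts of these pairings modulo f; the
  Koszul relation among the W_ab then gives r = t u modulo J, up to sign.
\<close>

lemma Rn_0 [simp]: "0 \<in> Rn n"
  by (simp add: Rn_def)

lemma Rn_1 [simp]: "1 \<in> Rn n"
  by (simp add: Rn_def)

lemma Rn_add [simp]:
  assumes "a \<in> Rn n" "b \<in> Rn n"
  shows "a + b \<in> Rn n"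
  using assms keys_add[of a b] unfolding Rn_def by blast

lemma Rn_uminus [simp]: "a \<in> Rn n \<Longrightarrow> - a \<in> Rn n"
  by (simp add: Rn_def)

lemma Rn_diff [simp]: "a \<in> Rn n \<Longrightarrow> b \<in> Rn n \<Longrightarrow> a - b \<in> Rn n"
  by (metis Rn_add Rn_uminus diff_conv_add_uminus)

lemma Rn_mult [simp]:
  assumes "a \<in> Rn n" "b \<in> Rn n"
  shows "a * b \<in> Rn n"
  unfolding Rn_def
proof (simp only: mem_Collect_eq, intro ballI)
  fix m assume "m \<in> Poly_Mapping.keys (a * b)"
  then obtain x y where "m = x + y" "x \<in> Poly_Mapping.keys a" "y \<in> Poly_Mapping.keys b"
    using keys_mult by blast
  then show "Poly_Mapping.keys m \<subseteq> {..n}"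
    using assms keys_add[of x y] unfolding Rn_def by blast
qed

lemma Rn_sum [simp]: "(\<And>x. x \<in> A \<Longrightarrow> f x \<in> Rn n) \<Longrightarrow> sum f A \<in> Rn n"
  by (induction A rule: infinite_finite_induct) simp_all

lemma Rn_power [simp]: "a \<in> Rn n \<Longrightarrow> a ^ m \<in> Rn n"
  by (induction m) simp_all

lemma is_ideal_sum:
  assumes "is_ideal n J" "\<And>x. x \<in> A \<Longrightarrow> f x \<in> J"
  shows "sum f A \<in> J"
  using assms(2)
  by (induction A rule: infinite_finite_induct) (use assms(1) in \<open>auto simp: is_ideal_def\<close>)

lemma is_ideal_colon:
  assumes "is_ideal n J"
  shows "is_ideal n (colon n J I)"
  using assms unfolding is_ideal_def colon_def by (auto simp: distrib_right mult.assoc)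

lemma ideal_gen_empty: "ideal_gen n {} = {0}"
  by (auto simp: ideal_gen_def)

lemma ideal_gen_zero: "0 \<in> ideal_gen n S"
  unfolding ideal_gen_def by (intro CollectI exI[of _ "{}"]) simp

lemma ideal_gen_base: "a \<in> S \<Longrightarrow> a \<in> ideal_gen n S"
  unfolding ideal_gen_def by (intro CollectI exI[of _ "{a}"] exI[of _ "\<lambda>_. 1"]) simp

lemma ideal_gen_mono: "S \<subseteq> T \<Longrightarrow> ideal_gen n S \<subseteq> ideal_gen n T"
  unfolding ideal_gen_def by blast

lemma ideal_gen_add:
  assumes "p \<in> ideal_gen n S" "q \<in> ideal_gen n S"
  shows "p + q \<in> ideal_gen n S"
proof -
  obtain F c where F: "finite F" "F \<subseteq> S" "\<forall>x\<in>F. c x \<in> Rn n" "p = (\<Sum>x\<in>F. c x * x)"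
    using assms(1) unfolding ideal_gen_def by blast
  obtain G d where G: "finite G" "G \<subseteq> S" "\<forall>x\<in>G. d x \<in> Rn n" "q = (\<Sum>x\<in>G. d x * x)"
    using assms(2) unfolding ideal_gen_def by blast
  define e where "e x = (if x \<in> F then c x else 0) + (if x \<in> G then d x else 0)" for x
  have "(\<Sum>x\<in>F \<union> G. e x * x)
      = (\<Sum>x\<in>F \<union> G. if x \<in> F then c x * x else 0)
        + (\<Sum>x\<in>F \<union> G. if x \<in> G then d x * x else 0)"
    by (simp add: e_def distrib_right sum.distrib if_distrib[of "\<lambda>y. y * _"] cong: if_cong)
  also have "\<dots> = p + q"
    using F G by (simp add: sum.inter_restrict[symmetric] Un_Int_eq)
  finally show ?thesis
    unfolding ideal_gen_def using F G
    by (intro CollectI exI[of _ "F \<union> G"] exI[of _ e]) (auto simp: e_def)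
qed

lemma ideal_gen_mult:
  assumes "r \<in> Rn n" "p \<in> ideal_gen n S"
  shows "r * p \<in> ideal_gen n S"
proof -
  obtain F c where F: "finite F" "F \<subseteq> S" "\<forall>x\<in>F. c x \<in> Rn n" "p = (\<Sum>x\<in>F. c x * x)"
    using assms(2) unfolding ideal_gen_def by blast
  have "r * p = (\<Sum>x\<in>F. (r * c x) * x)"
    by (simp add: F(4) sum_distrib_left mult.assoc)
  then show ?thesis
    unfolding ideal_gen_def using F assms(1)
    by (intro CollectI exI[of _ F] exI[of _ "\<lambda>x. r * c x"]) auto
qed

lemma ideal_gen_mult_base: "r \<in> Rn n \<Longrightarrow> a \<in> S \<Longrightarrow> r * a \<in> ideal_gen n S"
  by (simp add: ideal_gen_base ideal_gen_mult)

lemma ideal_gen_uminus: "p \<in> ideal_gen n S \<Longrightarrow> - p \<in> ideal_gen n S"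
  using ideal_gen_mult[of "-1" n p S] by simp

lemma ideal_gen_diff: "p \<in> ideal_gen n S \<Longrightarrow> q \<in> ideal_gen n S \<Longrightarrow> p - q \<in> ideal_gen n S"
  unfolding diff_conv_add_uminus by (intro ideal_gen_add ideal_gen_uminus)

lemma is_ideal_ideal_gen:
  assumes "S \<subseteq> Rn n"
  shows "is_ideal n (ideal_gen n S)"
proof -
  have "ideal_gen n S \<subseteq> Rn n"
    using assms unfolding ideal_gen_def by (auto intro!: Rn_sum)
  then show ?thesis
    unfolding is_ideal_def by (simp add: ideal_gen_zero ideal_gen_add ideal_gen_mult)
qed

lemma ideal_gen_least:
  assumes "is_ideal n J" "S \<subseteq> J"
  shows "ideal_gen n S \<subseteq> J"
proof
  fix p assume "p \<in> ideal_gen n S"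
  then obtain F c where F: "F \<subseteq> S" "\<forall>x\<in>F. c x \<in> Rn n" "p = (\<Sum>x\<in>F. c x * x)"
    unfolding ideal_gen_def by blast
  show "p \<in> J"
    unfolding F(3) using assms F(1,2) by (intro is_ideal_sum[OF assms(1)]) (auto simp: is_ideal_def)
qed

lemma ideal_gen_insert:
  "ideal_gen n (insert a S) = {x * a + y | x y. x \<in> Rn n \<and> y \<in> ideal_gen n S}"
proof (intro set_eqI iffI)
  fix p assume "p \<in> ideal_gen n (insert a S)"
  then obtain F c where F: "finite F" "F \<subseteq> insert a S" "\<forall>x\<in>F. c x \<in> Rn n" "p = (\<Sum>x\<in>F. c x * x)"
    unfolding ideal_gen_def by blast
  define x where "x = (if a \<in> F then c a else 0)"
  have "p = x * a + (\<Sum>g\<in>F - {a}. c g * g)"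
    using F by (cases "a \<in> F") (simp_all add: x_def sum.remove)
  moreover have "(\<Sum>g\<in>F - {a}. c g * g) \<in> ideal_gen n S"
    unfolding ideal_gen_def using F by blast
  moreover have "x \<in> Rn n" using F by (simp add: x_def)
  ultimately show "p \<in> {x * a + y | x y. x \<in> Rn n \<and> y \<in> ideal_gen n S}" by blast
next
  fix p assume "p \<in> {x * a + y | x y. x \<in> Rn n \<and> y \<in> ideal_gen n S}"
  then obtain x y where "x \<in> Rn n" "y \<in> ideal_gen n S" "p = x * a + y" by blast
  then show "p \<in> ideal_gen n (insert a S)"
    using ideal_gen_mono[of S "insert a S" n] by (auto intro!: ideal_gen_add ideal_gen_mult_base)
qed

lemma ideal_gen_singleton: "p \<in> ideal_gen n {a} \<longleftrightarrow> (\<exists>x\<in>Rn n. p = x * a)"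
  by (auto simp: ideal_gen_insert ideal_gen_empty)

lemma ideal_gen_pair: "p \<in> ideal_gen n {a, b} \<longleftrightarrow> (\<exists>x\<in>Rn n. \<exists>y\<in>Rn n. p = x * a + y * b)"
  by (auto simp: ideal_gen_insert ideal_gen_empty)

locale regular_triple =
  fixes n :: nat and f g h :: "'k::field mpoly"
  assumes regular: "regular_seq n [f, g, h]"
begin

lemma generators_Rn: "f \<in> Rn n" "g \<in> Rn n" "h \<in> Rn n"
  using regular by (auto simp: regular_seq_def)

lemma first_nonzero: "f \<noteq> 0"
proof
  assume "f = 0"
  moreover have "r \<in> Rn n \<Longrightarrow> r * f \<in> ideal_gen n {} \<Longrightarrow> r \<in> ideal_gen n {}" for r
    using regular unfolding regular_seq_def
    by (metis length_greater_0_conv list.distinct(1) nth_Cons_0 set_empty take0)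
  ultimately have "(1 :: 'k mpoly) \<in> ideal_gen n {}"
    using Rn_1 by (metis ideal_gen_zero mult_zero_right)
  then show False by (simp add: ideal_gen_empty)
qed

lemma syzygy_second_coeff:
  assumes "a \<in> Rn n" "b \<in> Rn n" "a * f + b * g = 0"
  shows "\<exists>t\<in>Rn n. b = t * f"
proof -
  have "b * g = (- a) * f" using assms(3) by (simp add: add_eq_0_iff)
  then have "b * g \<in> ideal_gen n {f}"
    using assms(1) by (auto simp: ideal_gen_singleton intro!: bexI[of _ "- a"])
  then have "b \<in> ideal_gen n {f}"
    using regular assms(2) unfolding regular_seq_def by (auto dest!: spec[of _ 1])
  then show ?thesis by (simp add: ideal_gen_singleton)
qed

lemma third_regular: "r \<in> Rn n \<Longrightarrow> r * h \<in> ideal_gen n {f, g} \<Longrightarrow> r \<in> ideal_gen n {f, g}"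
  using regular unfolding regular_seq_def by (auto dest!: spec[of _ 2] simp: numeral_2_eq_2)

lemma third_coeff_unique:
  assumes "x - b * h \<in> ideal_gen n {f, g}" "x - c * h \<in> ideal_gen n {f, g}" "b \<in> Rn n" "c \<in> Rn n"
  shows "b - c \<in> ideal_gen n {f, g}"
proof (rule third_regular)
  have "(b - c) * h = (x - c * h) - (x - b * h)" by (simp add: algebra_simps)
  then show "(b - c) * h \<in> ideal_gen n {f, g}" by (metis assms(1,2) ideal_gen_diff)
qed (use assms(3,4) in simp)

end

definition del_nth :: "nat \<Rightarrow> 'b list \<Rightarrow> 'b list" where
  "del_nth p xs = take p xs @ drop (Suc p) xs"

lemma pf_Cons: "pf M (x # L) = (\<Sum>p<length L. (-1)^p * M x (L!p) * pf M (del_nth p L))"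
  by (simp add: del_nth_def)

declare pf.simps(2) [simp del]

lemma length_del_nth [simp]: "p < length xs \<Longrightarrow> length (del_nth p xs) = length xs - 1"
  by (simp add: del_nth_def)

lemma nth_del_nth:
  "p < length xs \<Longrightarrow> q < length xs - 1 \<Longrightarrow> del_nth p xs ! q = xs ! (if q < p then q else Suc q)"
  by (auto simp: del_nth_def nth_append min_def)

lemma del_nth_del_nth:
  assumes "p \<le> q" "Suc q < length xs"
  shows "del_nth q (del_nth p xs) = del_nth p (del_nth (Suc q) xs)"
proof (rule nth_equalityI)
  show "length (del_nth q (del_nth p xs)) = length (del_nth p (del_nth (Suc q) xs))"
    using assms by simp
  fix t assume "t < length (del_nth q (del_nth p xs))"
  then have t: "t < length xs - 2" using assms by simp
  show "del_nth q (del_nth p xs) ! t = del_nth p (del_nth (Suc q) xs) ! t"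
    using assms t by (simp add: nth_del_nth)
qed

lemma del_nth_append:
  "del_nth p (u @ v) = (if p < length u then del_nth p u @ v else u @ del_nth (p - length u) v)"
  by (auto simp: del_nth_def Suc_diff_le)

lemma del_nth_Cons_Suc [simp]: "del_nth (Suc p) (b # ys) = b # del_nth p ys"
  by (simp add: del_nth_def)

lemma del_nth_Cons_0 [simp]: "del_nth 0 (b # ys) = ys"
  by (simp add: del_nth_def)

lemma set_del_nth: "set (del_nth p L) \<subseteq> set L"
  by (auto simp: del_nth_def dest: in_set_takeD in_set_dropD)

lemma del_nth_distinct:
  assumes "distinct L" "q < length L"
  shows "del_nth q L = filter (\<lambda>l. l \<noteq> L!q) L"
proof -
  define x where "x = L!q"
  have L: "L = take q L @ x # drop (Suc q) L" using assms by (simp add: id_take_nth_drop x_def)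
  have d: "distinct (take q L @ x # drop (Suc q) L)" using assms(1) L by metis
  then have n1: "x \<notin> set (take q L)" and n2: "x \<notin> set (drop (Suc q) L)" by auto
  have "filter (\<lambda>l. l \<noteq> x) (take q L @ x # drop (Suc q) L) = take q L @ drop (Suc q) L"
  proof -
    have "filter (\<lambda>l. l \<noteq> x) (take q L) = take q L"
      by (rule filter_True) (use n1 in auto)
    moreover have "filter (\<lambda>l. l \<noteq> x) (drop (Suc q) L) = drop (Suc q) L"
      by (rule filter_True) (use n2 in auto)
    ultimately show ?thesis by simp
  qed
  then have "filter (\<lambda>l. l \<noteq> x) L = take q L @ drop (Suc q) L" using L by metis
  then show ?thesis by (simp add: del_nth_def x_def)
qed

definition del_two :: "'b list \<Rightarrow> nat \<Rightarrow> nat \<Rightarrow> 'b list" where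
  "del_two ys p q = del_nth (min p q) (del_nth (max p q) ys)"

lemma del_two_commute: "del_two ys p q = del_two ys q p"
  by (simp add: del_two_def min.commute max.commute)

lemma sum_skip_index:
  fixes G :: "nat \<Rightarrow> 'a::comm_monoid_add"
  assumes "p < n"
  shows "(\<Sum>q<n. (if q = p then 0 else G q)) = (\<Sum>q<n-1. G (if q < p then q else Suc q))"
proof -
  let ?t = "\<lambda>q::nat. if q < p then q else Suc q"
  have inj: "inj_on ?t {..<n-1}" by (auto simp: inj_on_def split: if_splits)
  have img: "?t ` {..<n-1} = {..<n} - {p}"
  proof (rule set_eqI, rule iffI)
    fix x assume "x \<in> ?t ` {..<n-1}" then show "x \<in> {..<n} - {p}" using assms by auto
  next
    fix x assume x: "x \<in> {..<n} - {p}"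
    show "x \<in> ?t ` {..<n-1}"
    proof (cases "x < p")
      case True then show ?thesis using x assms by (auto intro!: image_eqI[of _ _ x])
    next
      case False then have "x = ?t (x - 1)" "x - 1 \<in> {..<n-1}" using x by auto
      then show ?thesis by blast
    qed
  qed
  have "(\<Sum>q<n. (if q = p then 0 else G q)) = (\<Sum>q\<in>{..<n} - {p}. G q)"
    by (rule sum.mono_neutral_cong_right) auto
  also have "\<dots> = (\<Sum>q<n-1. G (?t q))"
    using sum.reindex[OF inj, of G] img by simp
  finally show ?thesis .
qed

lemma sum_sum_antisym:
  fixes g :: "nat \<Rightarrow> nat \<Rightarrow> 'a::comm_ring_1"
  assumes as: "\<And>p q. g q p = - g p q" and dg: "\<And>p. g p p = 0"
  shows "(\<Sum>p<n. \<Sum>q<n. g p q) = 0"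
proof (induction n)
  case 0 then show ?case by simp
next
  case (Suc n)
  have "(\<Sum>p<Suc n. \<Sum>q<Suc n. g p q) = (\<Sum>p<Suc n. (\<Sum>q<n. g p q) + g p n)"
    by (simp only: sum.lessThan_Suc)
  also have "\<dots> = (\<Sum>p<n. (\<Sum>q<n. g p q) + g p n) + ((\<Sum>q<n. g n q) + g n n)"
    by (simp only: sum.lessThan_Suc)
  also have "\<dots> = (\<Sum>p<n. \<Sum>q<n. g p q) + (\<Sum>p<n. g p n + g n p) + g n n"
    by (simp only: sum.distrib add.assoc add.left_commute)
  also have "(\<Sum>p<n. g p n + g n p) = 0"
    by (rule sum.neutral) (simp add: as[of n])
  finally show ?case using Suc dg by simp
qed

text \<open>The term of the expansion of pf M (a # b # ys) along its first two rows in which a is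
  paired with ys ! p and b with ys ! q.\<close>

definition pf_pair_term ::
  "(nat \<Rightarrow> nat \<Rightarrow> 'a::comm_ring_1) \<Rightarrow> nat \<Rightarrow> nat \<Rightarrow> nat list \<Rightarrow> nat \<Rightarrow> nat \<Rightarrow> 'a" where
  "pf_pair_term M a b ys p q = (if p = q then 0 else
     (-1)^(p + q + (if p < q then 1 else 0)) * M a (ys!p) * M b (ys!q) * pf M (del_two ys p q))"

lemma neg_one_power_swap:
  "p \<noteq> q \<Longrightarrow> ((-1::'a::comm_ring_1) ^ (q + p + (if q < p then 1 else 0)))
     = - ((-1) ^ (p + q + (if p < q then 1 else 0)))"
  by (cases "p < q") (auto simp: add.commute)

lemma pf_pair_term_antisym: "pf_pair_term M b a ys q p = - pf_pair_term M a b ys p q"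
proof (cases "p = q")
  case True then show ?thesis by (simp add: pf_pair_term_def)
next
  case False
  then show ?thesis
    using neg_one_power_swap[OF False] by (simp add: pf_pair_term_def del_two_commute algebra_simps)
qed

lemma pf_pair_term_row:
  assumes "p < length ys"
  shows "(-1)^p * M a (ys!p) * pf M (b # del_nth p ys) = (\<Sum>q<length ys. pf_pair_term M a b ys p q)"
proof -
  let ?n = "length ys"
  have "(\<Sum>q<?n. pf_pair_term M a b ys p q)
      = (\<Sum>q<?n. if q = p then 0 else pf_pair_term M a b ys p q)"
    by (rule sum.cong[OF refl]) (simp add: pf_pair_term_def)
  also have "\<dots> = (\<Sum>q<?n - 1. pf_pair_term M a b ys p (if q < p then q else Suc q))"
    using sum_skip_index[OF assms] .
  also have "\<dots> = (\<Sum>q<?n - 1. (-1)^p * M a (ys!p)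
                     * ((-1)^q * M b (del_nth p ys ! q) * pf M (del_nth q (del_nth p ys))))"
  proof (rule sum.cong[OF refl])
    fix q assume q: "q \<in> {..<?n - 1}"
    show "pf_pair_term M a b ys p (if q < p then q else Suc q) = (-1)^p * M a (ys!p)
        * ((-1)^q * M b (del_nth p ys ! q) * pf M (del_nth q (del_nth p ys)))"
    proof (cases "q < p")
      case True
      have nth: "del_nth p ys ! q = ys ! q" using q assms True by (simp add: nth_del_nth)
      have rm: "del_two ys p q = del_nth q (del_nth p ys)"
        using True by (simp add: del_two_def min_def max_def)
      have sg: "(-1::'a)^(p + q + (if p < q then 1 else 0)) = (-1)^p * (-1)^q"
        using True by (simp add: power_add)
      show ?thesis using True
        by (simp only: pf_pair_term_def nth rm sg if_False if_True) (simp add: ac_simps)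
    next
      case False
      then have dd: "del_nth q (del_nth p ys) = del_nth p (del_nth (Suc q) ys)"
        using q by (intro del_nth_del_nth) auto
      have nth: "del_nth p ys ! q = ys ! Suc q" using q assms False by (simp add: nth_del_nth)
      have rm: "del_two ys p (Suc q) = del_nth q (del_nth p ys)"
        using False dd by (simp add: del_two_def min_def max_def)
      have sg: "(-1::'a)^(p + Suc q + (if p < Suc q then 1 else 0)) = (-1)^p * (-1)^q"
        using False by (simp add: power_add)
      have ne: "p \<noteq> Suc q" using False by simp
      show ?thesis using False ne
        by (simp only: pf_pair_term_def nth rm sg if_False if_True) (simp add: ac_simps)
    qed
  qed
  also have "\<dots> = (-1)^p * M a (ys!p) * pf M (b # del_nth p ys)"
    unfolding pf_Cons[of M b] using assms by (simp add: sum_distrib_left del: pf.simps)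
  finally show ?thesis by simp
qed

lemma pf_Cons_Cons:
  "pf M (a # b # ys) = M a b * pf M ys - (\<Sum>p<length ys. \<Sum>q<length ys. pf_pair_term M a b ys p q)"
proof -
  have "pf M (a # b # ys)
      = M a b * pf M ys + (\<Sum>p<length ys. (-1)^(Suc p) * M a (ys!p) * pf M (b # del_nth p ys))"
    by (simp only: pf_Cons[of M a] length_Cons sum.lessThan_Suc_shift) simp
  also have "(\<Sum>p<length ys. (-1)^(Suc p) * M a (ys!p) * pf M (b # del_nth p ys))
      = - (\<Sum>p<length ys. (-1)^p * M a (ys!p) * pf M (b # del_nth p ys))"
    by (simp add: sum_negf[symmetric])
  also have "(\<Sum>p<length ys. (-1)^p * M a (ys!p) * pf M (b # del_nth p ys))
      = (\<Sum>p<length ys. \<Sum>q<length ys. pf_pair_term M a b ys p q)"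
    by (rule sum.cong[OF refl]) (rule pf_pair_term_row, simp)
  finally show ?thesis by simp
qed

definition upt_minus :: "nat \<Rightarrow> nat set \<Rightarrow> nat list" where
  "upt_minus s D = filter (\<lambda>l. l \<notin> D) [0..<s]"

lemma pf_del_upt_minus: "pf_del s M D = pf M (upt_minus s D)"
  by (simp add: pf_del_def upt_minus_def)

lemma set_upt_minus [simp]: "set (upt_minus s D) = {..<s} - D"
  by (auto simp: upt_minus_def)

lemma distinct_upt_minus [simp]: "distinct (upt_minus s D)"
  by (simp add: upt_minus_def)

lemma del_nth_upt_minus:
  assumes "q < length (upt_minus s D)"
  shows "del_nth q (upt_minus s D) = upt_minus s (insert (upt_minus s D ! q) D)"
  using del_nth_distinct[OF distinct_upt_minus assms] by (simp add: upt_minus_def conj_commute)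

lemma length_upt_minus_singleton: "length (upt_minus a {b}) = a - (if b < a then 1 else 0)"
  by (induction a) (auto simp: upt_minus_def)

lemma upt_minus_split:
  assumes "a < s"
  shows "upt_minus s (insert a D) = upt_minus a D @ filter (\<lambda>l. l \<notin> D) [Suc a..<s]"
    and "a \<notin> D \<Longrightarrow> upt_minus s D = upt_minus a D @ a # filter (\<lambda>l. l \<notin> D) [Suc a..<s]"
proof -
  have u: "[0..<s] = [0..<a] @ a # [Suc a..<s]"
    using assms upt_add_eq_append[of 0 a "s - a"] upt_conv_Cons[of a s] by simp
  have "filter (\<lambda>l. l \<notin> insert a D) [0..<a] = upt_minus a D"
    unfolding upt_minus_def by (rule filter_cong) auto
  moreover have "filter (\<lambda>l. l \<notin> insert a D) [Suc a..<s] = filter (\<lambda>l. l \<notin> D) [Suc a..<s]"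
    by (rule filter_cong) auto
  ultimately show "upt_minus s (insert a D) = upt_minus a D @ filter (\<lambda>l. l \<notin> D) [Suc a..<s]"
    unfolding upt_minus_def[of s] by (subst u) (simp del: upt_Suc)
  show "a \<notin> D \<Longrightarrow> upt_minus s D = upt_minus a D @ a # filter (\<lambda>l. l \<notin> D) [Suc a..<s]"
    unfolding upt_minus_def by (subst u) (simp del: upt_Suc)
qed


locale skew_matrix =
  fixes M :: "nat \<Rightarrow> nat \<Rightarrow> 'a::comm_ring_1"
  assumes skew: "\<And>a b. M b a = - M a b" and diag: "\<And>a. M a a = 0"
begin

lemma pf_swap_head: "pf M (b # a # ys) = - pf M (a # b # ys)"
proof -
  let ?g = "\<lambda>p q. pf_pair_term M a b ys p q + pf_pair_term M b a ys p q"
  have "(\<Sum>p<length ys. \<Sum>q<length ys. ?g p q) = 0"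
  proof (rule sum_sum_antisym)
    fix p q
    show "?g q p = - ?g p q"
      using pf_pair_term_antisym[of M a b ys p q] pf_pair_term_antisym[of M b a ys p q] by simp
  next
    fix p show "?g p p = 0" by (simp add: pf_pair_term_def)
  qed
  then have e: "(\<Sum>p<length ys. \<Sum>q<length ys. pf_pair_term M a b ys p q)
      + (\<Sum>p<length ys. \<Sum>q<length ys. pf_pair_term M b a ys p q) = 0"
    by (simp add: sum.distrib)
  have "pf M (b # a # ys) + pf M (a # b # ys) = (M b a + M a b) * pf M ys
     - ((\<Sum>p<length ys. \<Sum>q<length ys. pf_pair_term M a b ys p q)
        + (\<Sum>p<length ys. \<Sum>q<length ys. pf_pair_term M b a ys p q))"
    by (simp only: pf_Cons_Cons) (simp add: algebra_simps)
  also have "\<dots> = 0" using e skew[of a b] by simp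
  finally show ?thesis by (simp add: eq_neg_iff_add_eq_0)
qed

lemma pf_repeat_head: "pf M (a # a # ys) = 0"
proof -
  have "(\<Sum>p<length ys. \<Sum>q<length ys. pf_pair_term M a a ys p q) = 0"
  proof (rule sum_sum_antisym)
    fix p q
    show "pf_pair_term M a a ys q p = - pf_pair_term M a a ys p q"
      by (rule pf_pair_term_antisym)
  next
    fix p show "pf_pair_term M a a ys p p = 0" by (simp add: pf_pair_term_def)
  qed
  then show ?thesis by (simp add: pf_Cons_Cons diag)
qed

lemma pf_swap: "pf M (xs @ a # b # ys) = - pf M (xs @ b # a # ys)"
proof (induction "length xs + length ys" arbitrary: xs ys rule: less_induct)
  case less
  show ?case
  proof (cases xs)
    case Nil then show ?thesis using pf_swap_head[of a b ys] by simp
  next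
    case (Cons c xs')
    define L where "L = xs' @ a # b # ys"
    define L' where "L' = xs' @ b # a # ys"
    define m where "m = length xs'"
    define N where "N = length L"
    have lenL': "length L' = N" by (simp add: L_def L'_def N_def)
    have mN: "Suc m < N" by (simp add: m_def N_def L_def)
    define t where "t = (\<lambda>p. (-1)^p * M c (L!p) * pf M (del_nth p L))"
    define t' where "t' = (\<lambda>p. (-1)^p * M c (L'!p) * pf M (del_nth p L'))"
    define \<sigma> where "\<sigma> = (\<lambda>p. if p = m then Suc m else if p = Suc m then m else p)"
    have key: "t' p = - t (\<sigma> p)" if p: "p < N" for p
    proof -
      consider (lt) "p < m" | (eq) "p = m" | (eq1) "p = Suc m" | (gt) k where "p = Suc (Suc (m + k))"
        by (metis add_Suc_right less_imp_Suc_add linorder_neqE_nat not_less_eq)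
      then show ?thesis
      proof cases
        case lt
        have IH: "pf M (del_nth p xs' @ a # b # ys) = - pf M (del_nth p xs' @ b # a # ys)"
          using lt by (intro less) (auto simp: Cons m_def)
        have "\<sigma> p = p" using lt by (simp add: \<sigma>_def)
        then show ?thesis using lt IH
          by (simp add: t_def t'_def L_def L'_def m_def del_nth_append nth_append)
      next
        case eq
        then show ?thesis
          by (simp add: t_def t'_def L_def L'_def m_def \<sigma>_def del_nth_append nth_append)
      next
        case eq1
        then show ?thesis
          by (simp add: t_def t'_def L_def L'_def m_def \<sigma>_def del_nth_append nth_append)
      next
        case gt
        have kl: "k < length ys" using gt p by (simp add: N_def L_def m_def)
        have IH: "pf M (xs' @ a # b # del_nth k ys) = - pf M (xs' @ b # a # del_nth k ys)"
          using kl by (intro less) (auto simp: Cons)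
        have "\<sigma> p = p" using gt by (simp add: \<sigma>_def)
        then show ?thesis using gt IH
          by (simp add: t_def t'_def L_def L'_def m_def del_nth_append nth_append)
      qed
    qed
    have "pf M (xs @ b # a # ys) = (\<Sum>p<N. t' p)"
    proof -
      have e: "xs @ b # a # ys = c # L'" by (simp add: Cons L'_def)
      show ?thesis unfolding e pf_Cons lenL' t'_def ..
    qed
    also have "\<dots> = (\<Sum>p<N. - t (\<sigma> p))" using key by simp
    also have "\<dots> = - (\<Sum>p<N. t (\<sigma> p))" by (simp add: sum_negf)
    also have "(\<Sum>p<N. t (\<sigma> p)) = (\<Sum>p<N. t p)"
      by (rule sum.reindex_bij_witness[of _ \<sigma> \<sigma>]) (use mN in \<open>auto simp: \<sigma>_def\<close>)
    also have "(\<Sum>p<N. t p) = pf M (xs @ a # b # ys)"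
    proof -
      have e: "xs @ a # b # ys = c # L" by (simp add: Cons L_def)
      show ?thesis unfolding e pf_Cons N_def t_def ..
    qed
    finally show ?thesis by simp
  qed
qed

lemma pf_move: "pf M (xs @ a # ys @ zs) = (-1)^length ys * pf M (xs @ ys @ a # zs)"
proof (induction ys arbitrary: xs)
  case Nil then show ?case by simp
next
  case (Cons y ys)
  have "pf M (xs @ a # (y # ys) @ zs) = - pf M (xs @ y # a # ys @ zs)"
    using pf_swap[of xs a y "ys @ zs"] by simp
  also have "pf M (xs @ y # a # ys @ zs) = pf M ((xs @ [y]) @ a # ys @ zs)" by simp
  also have "\<dots> = (-1)^length ys * pf M ((xs @ [y]) @ ys @ a # zs)" by (rule Cons)
  finally show ?case by simp
qed

lemma pf_Cons_mem:
  assumes "a \<in> set L"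
  shows "pf M (a # L) = 0"
proof -
  obtain u v where L: "L = u @ a # v" using assms by (meson split_list)
  have "pf M ([a] @ a # u @ v) = (-1)^length u * pf M ([a] @ u @ a # v)" by (rule pf_move)
  then have "(-1)^length u * pf M (a # L) = 0" using pf_repeat_head[of a "u @ v"] by (simp add: L)
  then have "(-1)^length u * ((-1)^length u * pf M (a # L)) = 0" by simp
  then show ?thesis by simp
qed

lemma pf_Cons_insert:
  "q \<le> length L \<Longrightarrow> pf M (a # L) = (-1)^q * pf M (take q L @ a # drop q L)"
  using pf_move[of "[]" a "take q L" "drop q L"] by (simp add: min_def)

lemma pf_Cons_upt_minus:
  assumes "a < s" "b \<noteq> a"
  shows "pf M (a # upt_minus s {a, b})
    = (-1) ^ (a - (if b < a then 1 else 0)) * pf M (upt_minus s {b})"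
proof -
  let ?U = "upt_minus a {b}" and ?T = "filter (\<lambda>l. l \<notin> {b}) [Suc a..<s]"
  have "pf M (a # ?U @ ?T) = (-1) ^ length ?U * pf M (?U @ a # ?T)"
    using pf_Cons_insert[of "length ?U" "?U @ ?T" a] by simp
  then show ?thesis
    using upt_minus_split[OF assms(1), of "{b}"] assms(2) by (simp add: length_upt_minus_singleton)
qed

end

text \<open>A matrix that is alternating only on indices below s becomes globally alternating once
  extended by zero, so that the lemmas of skew_matrix apply to it.\<close>

definition mat_restrict :: "nat \<Rightarrow> (nat \<Rightarrow> nat \<Rightarrow> 'a::comm_ring_1) \<Rightarrow> nat \<Rightarrow> nat \<Rightarrow> 'a" where
  "mat_restrict s M = (\<lambda>a b. if a < s \<and> b < s then M a b else 0)"

lemma skew_matrix_mat_restrict: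
  assumes "\<And>a b. a < s \<Longrightarrow> b < s \<Longrightarrow> M b a = - M a b" "\<And>a. a < s \<Longrightarrow> M a a = 0"
  shows "skew_matrix (mat_restrict s M)"
proof
  fix a b show "mat_restrict s M b a = - mat_restrict s M a b"
  proof (cases "a < s \<and> b < s")
    case True
    then have "M b a = - M a b" by (intro assms(1)) auto
    then show ?thesis using True by (simp add: mat_restrict_def)
  next
    case False then show ?thesis by (auto simp: mat_restrict_def)
  qed
next
  fix a show "mat_restrict s M a a = 0" using assms(2) by (simp add: mat_restrict_def)
qed

lemma pf_mat_restrict: "set xs \<subseteq> {..<s} \<Longrightarrow> pf (mat_restrict s M) xs = pf M xs"
proof (induction "length xs" arbitrary: xs rule: less_induct)
  case less
  show ?case
  proof (cases xs)
    case Nil then show ?thesis by simp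
  next
    case (Cons x L)
    have "pf (mat_restrict s M) (del_nth p L) = pf M (del_nth p L)" if "p < length L" for p
      using less set_del_nth[of p L] that by (intro less) (auto simp: Cons)
    moreover have "mat_restrict s M x (L!p) = M x (L!p)" if "p < length L" for p
    proof -
      have "L!p \<in> set xs" using nth_mem[OF that] by (simp add: Cons)
      moreover have "x \<in> set xs" by (simp add: Cons)
      ultimately show ?thesis using less.prems by (auto simp: mat_restrict_def)
    qed
    ultimately show ?thesis by (simp add: Cons pf_Cons del: pf.simps)
  qed
qed

lemma pf_Rn: "(\<forall>a\<in>set xs. \<forall>b\<in>set xs. M a b \<in> Rn n) \<Longrightarrow> pf M xs \<in> Rn n"
proof (induction "length xs" arbitrary: xs rule: less_induct)
  case less
  show ?case
  proof (cases xs)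
    case Nil then show ?thesis by simp
  next
    case (Cons x L)
    have "pf M (del_nth p L) \<in> Rn n" if "p < length L" for p
    proof (rule less)
      show "length (del_nth p L) < length xs" using that by (simp add: Cons)
      show "\<forall>a\<in>set (del_nth p L). \<forall>b\<in>set (del_nth p L). M a b \<in> Rn n"
        using less.prems set_del_nth[of p L] unfolding Cons
        by (meson list.set_intros(2) subsetD)
    qed
    moreover have "M x (L!p) \<in> Rn n" if "p < length L" for p
      using less that by (auto simp: Cons)
    ultimately show ?thesis unfolding Cons pf_Cons by (intro Rn_sum Rn_mult Rn_power) auto
  qed
qed

definition pf_cofactor :: "(nat \<Rightarrow> nat \<Rightarrow> 'a::comm_ring_1) \<Rightarrow> nat list \<Rightarrow> nat \<Rightarrow> 'a" where
  "pf_cofactor M L l = (\<Sum>p<length L. if L ! p = l then (-1)^p * pf M (del_nth p L) else 0)"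

lemma mat_vec_pf_cofactor:
  assumes "set L \<subseteq> {..<s}" "m < s"
  shows "mat_vec s M (pf_cofactor M L) m = pf M (m # L)"
proof -
  have L_lt: "L ! p < s" if "p < length L" for p
    using assms(1) nth_mem[OF that] by auto
  have "mat_vec s M (pf_cofactor M L) m
      = (\<Sum>l<s. \<Sum>p<length L. if L ! p = l then M m l * ((-1)^p * pf M (del_nth p L)) else 0)"
    using assms(2)
    by (simp add: mat_vec_def pf_cofactor_def sum_distrib_left if_distrib cong: if_cong)
  also have "\<dots>
      = (\<Sum>p<length L. \<Sum>l<s. if L ! p = l then M m l * ((-1)^p * pf M (del_nth p L)) else 0)"
    by (rule sum.swap)
  also have "\<dots> = (\<Sum>p<length L. M m (L ! p) * ((-1)^p * pf M (del_nth p L)))"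
    by (rule sum.cong[OF refl]) (use L_lt in \<open>simp add: sum.delta\<close>)
  also have "\<dots> = pf M (m # L)"
    by (simp add: pf_Cons algebra_simps)
  finally show ?thesis .
qed

lemma pf_cofactor_notin: "l \<notin> set L \<Longrightarrow> pf_cofactor M L l = 0"
  unfolding pf_cofactor_def by (rule sum.neutral) (use nth_mem in force)

lemma pf_cofactor_nth:
  assumes "distinct L" "q < length L"
  shows "pf_cofactor M L (L ! q) = (-1)^q * pf M (del_nth q L)"
proof -
  have "pf_cofactor M L (L ! q) = (\<Sum>p<length L. if p = q then (-1)^p * pf M (del_nth p L) else 0)"
    unfolding pf_cofactor_def
    by (rule sum.cong[OF refl]) (use assms in \<open>auto simp: nth_eq_iff_index_eq\<close>)
  then show ?thesis using assms(2) by simp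
qed

lemma pf_cofactor_Rn:
  assumes "\<forall>a\<in>set L. \<forall>b\<in>set L. M a b \<in> Rn n"
  shows "pf_cofactor M L l \<in> Rn n"
proof -
  have "pf M (del_nth p L) \<in> Rn n" for p
    by (rule pf_Rn) (use assms set_del_nth[of p L] in blast)
  then show ?thesis unfolding pf_cofactor_def by (auto intro!: Rn_sum)
qed

lemma mat_vec_scale: "mat_vec s M (\<lambda>l. c * v l) m = c * mat_vec s M v m"
  by (simp add: mat_vec_def sum_distrib_left algebra_simps)

lemma mat_vec_lincomb:
  "mat_vec s M (\<lambda>l. x * u l - y * v l + z * w l) m
     = x * mat_vec s M u m - y * mat_vec s M v m + z * mat_vec s M w m"
  by (simp add: mat_vec_def sum_distrib_left sum.distrib sum_subtractf algebra_simps)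

lemma sum_lincomb:
  fixes x y z :: "'a::comm_ring_1"
  shows "(\<Sum>l\<in>S. (x * u l - y * v l + z * w l) * c l)
    = x * (\<Sum>l\<in>S. u l * c l) - y * (\<Sum>l\<in>S. v l * c l) + z * (\<Sum>l\<in>S. w l * c l)"
proof -
  have "(\<Sum>l\<in>S. (x * u l - y * v l + z * w l) * c l)
      = (\<Sum>l\<in>S. x * (u l * c l) - y * (v l * c l) + z * (w l * c l))"
    by (simp add: algebra_simps)
  also have "\<dots>
      = (\<Sum>l\<in>S. x * (u l * c l)) - (\<Sum>l\<in>S. y * (v l * c l)) + (\<Sum>l\<in>S. z * (w l * c l))"
    by (simp only: sum.distrib sum_subtractf)
  finally show ?thesis
    by (simp only: sum_distrib_left)
qed

definition pair_syzygy :: "nat \<Rightarrow> (nat \<Rightarrow> nat \<Rightarrow> 'a::comm_ring_1) \<Rightarrow> nat \<Rightarrow> nat \<Rightarrow> nat \<Rightarrow> 'a" where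
  "pair_syzygy s M a b l = (if b < a then -1 else 1) * pf_cofactor M (upt_minus s {a, b}) l"

locale alternating_matrix =
  fixes n s :: nat and M :: "nat \<Rightarrow> nat \<Rightarrow> 'k::field mpoly"
  assumes entry_Rn: "a < s \<Longrightarrow> b < s \<Longrightarrow> M a b \<in> Rn n"
    and skew: "a < s \<Longrightarrow> b < s \<Longrightarrow> M b a = - M a b"
    and diag: "a < s \<Longrightarrow> M a a = 0"
begin

interpretation restricted: skew_matrix "mat_restrict s M"
  using skew diag by (rule skew_matrix_mat_restrict)

lemma pf_del_Rn: "pf_del s M D \<in> Rn n"
  unfolding pf_del_upt_minus by (rule pf_Rn) (auto intro: entry_Rn)

lemma mat_vec_skew_pairing:
  "(\<Sum>l<s. mat_vec s M v l * w l) = - (\<Sum>l<s. v l * mat_vec s M w l)"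
proof -
  have "(\<Sum>l<s. mat_vec s M v l * w l) = (\<Sum>l<s. \<Sum>m<s. M l m * v m * w l)"
    by (simp add: mat_vec_def sum_distrib_right)
  also have "\<dots> = (\<Sum>m<s. \<Sum>l<s. M l m * v m * w l)"
    by (rule sum.swap)
  also have "\<dots> = (\<Sum>m<s. - (v m * (\<Sum>l<s. M m l * w l)))"
  proof (rule sum.cong[OF refl])
    fix m assume "m \<in> {..<s}"
    then have "(\<Sum>l<s. M l m * v m * w l) = (\<Sum>l<s. - (v m * (M m l * w l)))"
      by (intro sum.cong) (auto simp: skew[of m])
    then show "(\<Sum>l<s. M l m * v m * w l) = - (v m * (\<Sum>l<s. M m l * w l))"
      by (simp add: sum_negf sum_distrib_left)
  qed
  also have "\<dots> = - (\<Sum>l<s. v l * mat_vec s M w l)"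
    by (simp add: mat_vec_def sum_negf)
  finally show ?thesis .
qed

lemma pf_Cons_upt_minus_pair:
  assumes "a < s" "b \<noteq> a"
  shows "pf M (a # upt_minus s {a, b}) = (-1) ^ (a - (if b < a then 1 else 0)) * pf_del s M {b}"
  using restricted.pf_Cons_upt_minus[OF assms] assms(1)
  by (simp add: pf_del_upt_minus pf_mat_restrict subset_eq)

lemma mat_vec_pair_syzygy:
  assumes "a < s" "b < s" "a \<noteq> b"
  shows "mat_vec s M (pair_syzygy s M a b) m =
    (if m = a then (-1)^a * pf_del s M {b} else if m = b then - ((-1)^b * pf_del s M {a}) else 0)"
proof (cases "m < s")
  case False
  then show ?thesis using assms by (auto simp: mat_vec_def)
next
  case True
  define \<sigma> :: "'k mpoly" where "\<sigma> = (if b < a then -1 else 1)"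
  have W: "mat_vec s M (pair_syzygy s M a b) m = \<sigma> * pf M (m # upt_minus s {a, b})"
    using mat_vec_scale[of s M \<sigma> "pf_cofactor M (upt_minus s {a, b})" m]
      mat_vec_pf_cofactor[of "upt_minus s {a, b}" s m M] True
    by (simp add: pair_syzygy_def[abs_def] \<sigma>_def)
  consider "m = a" | "m = b" | "m \<noteq> a" "m \<noteq> b" by blast
  then show ?thesis
  proof cases
    case 1
    have "\<sigma> * (-1) ^ (a - (if b < a then 1 else 0)) = (-1) ^ a"
      by (cases a) (simp_all add: \<sigma>_def)
    then show ?thesis
      using W pf_Cons_upt_minus_pair[of a b] assms 1 by (simp add: mult.assoc[symmetric])
  next
    case 2
    have "\<sigma> * (-1) ^ (b - (if a < b then 1 else 0)) = - ((-1) ^ b)"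
      using assms(3) by (cases b) (simp_all add: \<sigma>_def)
    moreover have "pf M (b # upt_minus s {a, b}) = (-1) ^ (b - (if a < b then 1 else 0)) * pf_del s M {a}"
      using pf_Cons_upt_minus_pair[of b a] assms by (simp add: insert_commute)
    ultimately show ?thesis
      using W assms 2 by (simp add: mult.assoc[symmetric])
  next
    case 3
    then have "pf M (m # upt_minus s {a, b}) = 0"
      using restricted.pf_Cons_mem[of m "upt_minus s {a, b}"] True
      by (simp add: pf_mat_restrict subset_eq)
    then show ?thesis using W 3 by simp
  qed
qed

lemma pair_syzygy_Vn: "pair_syzygy s M a b \<in> Vn n s"
  using pf_cofactor_Rn[of "upt_minus s {a, b}" M n] pf_cofactor_notin[of _ "upt_minus s {a, b}" M]
  by (auto simp: Vn_def pair_syzygy_def entry_Rn)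

lemma pair_syzygy_first: "pair_syzygy s M a b a = 0"
  by (simp add: pair_syzygy_def pf_cofactor_notin)

lemma pair_syzygy_other:
  assumes "c < s" "c \<noteq> a" "c \<noteq> b"
  shows "pair_syzygy s M a b c \<in> {pf_del s M {a, b, c}, - pf_del s M {a, b, c}}"
proof -
  let ?L = "upt_minus s {a, b}"
  obtain q where q: "q < length ?L" "?L ! q = c"
    using assms by (metis DiffI empty_iff in_set_conv_nth insertE lessThan_iff set_upt_minus)
  have "insert c {a, b} = {a, b, c}" by auto
  then have "pf_cofactor M ?L c = (-1)^q * pf_del s M {a, b, c}"
    using pf_cofactor_nth[OF distinct_upt_minus q(1)] del_nth_upt_minus[OF q(1)] q(2)
    by (simp add: pf_del_upt_minus)
  then show ?thesis
    by (cases "even q") (auto simp: pair_syzygy_def)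
qed

lemma pairing_pair_syzygy:
  assumes "a < s" "b < s" "a \<noteq> b"
  shows "(\<Sum>l<s. mat_vec s M (pair_syzygy s M a b) l * w l)
    = (-1)^a * pf_del s M {b} * w a - (-1)^b * pf_del s M {a} * w b"
proof -
  have "(\<Sum>l<s. mat_vec s M (pair_syzygy s M a b) l * w l)
      = (\<Sum>l<s. (if l = a then (-1)^a * pf_del s M {b} * w a else 0)
               + (if l = b then - ((-1)^b * pf_del s M {a}) * w b else 0))"
    by (rule sum.cong[OF refl]) (use assms in \<open>auto simp: mat_vec_pair_syzygy\<close>)
  then show ?thesis
    using assms by (simp add: sum.distrib)
qed

end

locale pfaffian_ideal = alternating_matrix n s M
  for n s :: nat and M :: "nat \<Rightarrow> nat \<Rightarrow> 'k::field mpoly" +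
  fixes I :: "'k mpoly set"
  assumes ideal_eq: "I = {(\<Sum>l<s. pfvec s M l * v l) | v. v \<in> Vn n s}"
    and kernel_eq: "{v \<in> Vn n s. \<forall>m. mat_vec s M v m = 0} = {(\<lambda>l. r * pfvec s M l) | r. r \<in> Rn n}"
begin

lemma pfvec_Vn: "pfvec s M \<in> Vn n s"
  by (simp add: Vn_def pfvec_def pf_del_Rn)

lemma mat_vec_pfvec: "mat_vec s M (pfvec s M) m = 0"
proof -
  have "pfvec s M \<in> {(\<lambda>l. r * pfvec s M l) | r. r \<in> Rn n}"
    by (intro CollectI exI[of _ 1]) simp
  then show ?thesis unfolding kernel_eq[symmetric] by blast
qed

lemma kernel_multiple:
  assumes "v \<in> Vn n s" "\<And>m. mat_vec s M v m = 0"
  shows "\<exists>r\<in>Rn n. v = (\<lambda>l. r * pfvec s M l)"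
  using assms kernel_eq by blast

lemma ideal_subset_Rn: "I \<subseteq> Rn n"
  unfolding ideal_eq using pfvec_Vn by (auto simp: Vn_def intro!: Rn_sum)

lemma pfvec_in_ideal:
  assumes "l < s"
  shows "pfvec s M l \<in> I"
proof -
  define v :: "nat \<Rightarrow> 'k mpoly" where "v m = (if m = l then 1 else 0)" for m
  have "v \<in> Vn n s" using assms by (auto simp: Vn_def v_def)
  moreover have "(\<Sum>m<s. pfvec s M m * v m) = pfvec s M l"
    using assms by (simp add: v_def if_distrib[of "\<lambda>x. _ * x"] cong: if_cong)
  ultimately show ?thesis unfolding ideal_eq by (metis (mono_tags, lifting) mem_Collect_eq)
qed

end

lemma pfaffian_ideal_of_BE_matrix:
  assumes "BE_matrix n I s M"
  shows "pfaffian_ideal n s M I"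
proof -
  note BE = assms[unfolded BE_matrix_def]
  have entries: "\<forall>a<s. \<forall>b<s. M a b \<in> Rn n \<and> M b a = - M a b \<and> Poly_Mapping.lookup (M a b) 0 = 0"
    using BE by (elim conjE) assumption
  have diag: "\<forall>a<s. M a a = 0"
    using BE by (elim conjE) assumption
  have "I = {(\<Sum>l<s. pfvec s M l * v l) | v. v \<in> Vn n s}"
    using BE by (elim conjE) assumption
  moreover have "{v \<in> Vn n s. \<forall>m. mat_vec s M v m = 0} = {(\<lambda>l. r * pfvec s M l) | r. r \<in> Rn n}"
    using BE by (elim conjE) assumption
  ultimately show ?thesis
    using entries diag by unfold_locales blast+
qed


locale pfaffian_link = pfaffian_ideal n s M I
  for n s :: nat and M :: "nat \<Rightarrow> nat \<Rightarrow> 'k::field mpoly" and I :: "'k mpoly set" +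
  fixes i j k :: nat
  assumes indices: "i < s" "j < s" "k < s" "i \<noteq> j" "i \<noteq> k" "j \<noteq> k"
    and regular_Pfaffians: "regular_seq n [pf_del s M {i}, pf_del s M {j}, pf_del s M {k}]"
begin

abbreviation "f \<equiv> pf_del s M {i}"
abbreviation "g \<equiv> pf_del s M {j}"
abbreviation "h \<equiv> pf_del s M {k}"
abbreviation "u \<equiv> pf_del s M {i, j, k}"

sublocale regular_triple n f g h
  by (rule regular_triple.intro) (rule regular_Pfaffians)

lemma pfvec_indices:
  "pfvec s M i = (-1)^i * f" "pfvec s M j = (-1)^j * g" "pfvec s M k = (-1)^k * h"
  using indices by (simp_all add: pfvec_def)

text \<open>The combination lies in ker M = R p; its entry i identifies the multiplier with u up to
  sign.\<close>

lemma Koszul_combination_pair_syzygies: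
  "\<exists>e\<in>{1, -1}. \<forall>l.
     h * pair_syzygy s M i j l - g * pair_syzygy s M i k l + f * pair_syzygy s M j k l
       = e * u * pfvec s M l"
proof -
  define V where
    "V l = h * pair_syzygy s M i j l - g * pair_syzygy s M i k l + f * pair_syzygy s M j k l" for l
  have "V \<in> Vn n s"
    using pair_syzygy_Vn[of i j] pair_syzygy_Vn[of i k] pair_syzygy_Vn[of j k] pf_del_Rn
    unfolding Vn_def V_def by auto
  moreover have "mat_vec s M V m = 0" for m
  proof -
    have "mat_vec s M V m = h * mat_vec s M (pair_syzygy s M i j) m
        - g * mat_vec s M (pair_syzygy s M i k) m + f * mat_vec s M (pair_syzygy s M j k) m"
      unfolding V_def by (rule mat_vec_lincomb)
    also have "\<dots> = 0"
      using indices by (simp add: mat_vec_pair_syzygy algebra_simps)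
    finally show ?thesis .
  qed
  ultimately obtain a where a: "a \<in> Rn n" "V = (\<lambda>l. a * pfvec s M l)"
    using kernel_multiple by blast
  have "{j, k, i} = {i, j, k}" by auto
  then have "pair_syzygy s M j k i = 1 * u \<or> pair_syzygy s M j k i = (-1) * u"
    using pair_syzygy_other[of i j k] indices by simp
  then obtain \<epsilon> where \<epsilon>: "\<epsilon> \<in> {1, -1}" "pair_syzygy s M j k i = \<epsilon> * u"
    by blast
  have "f * (\<epsilon> * u) = f * (a * (-1)^i)"
    using fun_cong[OF a(2), of i] by (simp add: V_def pair_syzygy_first \<epsilon>(2) pfvec_indices)
  then have a_sign: "a * (-1)^i = \<epsilon> * u"
    using first_nonzero by auto
  have "a = a * ((-1)^i * (-1)^i)"
    by simp
  also have "\<dots> = (a * (-1)^i) * (-1)^i"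
    by (simp only: mult.assoc)
  also have "\<dots> = (-1)^i * \<epsilon> * u"
    by (simp only: a_sign ac_simps)
  finally have a_eq: "a = (-1)^i * \<epsilon> * u" .
  have "(-1)^i * \<epsilon> \<in> {1, -1}"
    using \<epsilon>(1) by (cases "even i") auto
  moreover have "V l = (-1)^i * \<epsilon> * u * pfvec s M l" for l
    using a(2) a_eq by simp
  ultimately show ?thesis
    unfolding V_def by blast
qed

lemma u_mult_ideal:
  assumes "x \<in> I"
  shows "u * x \<in> ideal_gen n {f, g, h}"
proof -
  obtain v where v: "v \<in> Vn n s" "x = (\<Sum>l<s. pfvec s M l * v l)"
    using assms ideal_eq by blast
  obtain e where e: "e \<in> {1, -1}"
    "\<And>l. h * pair_syzygy s M i j l - g * pair_syzygy s M i k l + f * pair_syzygy s M j k l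
          = e * u * pfvec s M l"
    using Koszul_combination_pair_syzygies by blast
  define S where "S w = (\<Sum>l<s. w l * v l)" for w
  have S_Rn: "S (pair_syzygy s M a b) \<in> Rn n" for a b
    using pair_syzygy_Vn[of a b] v(1) by (auto simp: S_def Vn_def intro!: Rn_sum)
  have "e * (u * x) = (\<Sum>l<s. (e * u * pfvec s M l) * v l)"
    by (simp add: v(2) sum_distrib_left ac_simps)
  also have "\<dots> = (\<Sum>l<s. (h * pair_syzygy s M i j l - g * pair_syzygy s M i k l
                          + f * pair_syzygy s M j k l) * v l)"
    by (simp add: e(2))
  also have "\<dots> = h * S (pair_syzygy s M i j) - g * S (pair_syzygy s M i k) + f * S (pair_syzygy s M j k)"
    unfolding S_def by (rule sum_lincomb)
  finally have eq: "e * (u * x)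
      = h * S (pair_syzygy s M i j) - g * S (pair_syzygy s M i k) + f * S (pair_syzygy s M j k)" .
  have "u * x = e * (e * (u * x))"
    using e(1) by auto
  then have "u * x = e * (h * S (pair_syzygy s M i j) - g * S (pair_syzygy s M i k)
                         + f * S (pair_syzygy s M j k))"
    by (simp only: eq)
  also have "\<dots> = e * (S (pair_syzygy s M i j) * h - S (pair_syzygy s M i k) * g
                         + S (pair_syzygy s M j k) * f)"
    by (simp only: mult.commute[of h] mult.commute[of g] mult.commute[of f])
  finally have ux: "u * x = e * (S (pair_syzygy s M i j) * h - S (pair_syzygy s M i k) * g
                                 + S (pair_syzygy s M j k) * f)" .
  show ?thesis
    unfolding ux using e(1) S_Rn
    by (intro ideal_gen_mult ideal_gen_add ideal_gen_diff ideal_gen_base) auto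
qed

lemma colon_superset: "ideal_gen n {f, g, h, u} \<subseteq> colon n (ideal_gen n {f, g, h}) I"
proof (rule ideal_gen_least)
  show "is_ideal n (colon n (ideal_gen n {f, g, h}) I)"
    using generators_Rn by (intro is_ideal_colon is_ideal_ideal_gen) auto
  have "x * a \<in> ideal_gen n {f, g, h}" if "x \<in> {f, g, h}" "a \<in> I" for x a
    using that ideal_subset_Rn by (auto simp: mult.commute[of x] intro!: ideal_gen_mult_base)
  then show "{f, g, h, u} \<subseteq> colon n (ideal_gen n {f, g, h}) I"
    using generators_Rn pf_del_Rn u_mult_ideal by (auto simp: colon_def)
qed

text \<open>For r in the colon ideal, b and z are the parts of a lift of multiplication by r, from the
  resolution of I to the Koszul complex of f, g, h, that survive modulo f and g; the other
  coordinates of the lift are never needed.\<close>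

context
  fixes r :: "'k mpoly" and b y z :: "nat \<Rightarrow> 'k mpoly"
  assumes r_Rn: "r \<in> Rn n"
    and b: "\<And>l. l < s \<Longrightarrow> b l \<in> Rn n \<and> r * pfvec s M l - b l * h \<in> ideal_gen n {f, g}"
    and yz: "\<And>m. m < s \<Longrightarrow> y m \<in> Rn n \<and> z m \<in> Rn n \<and> mat_vec s M b m = y m * f + z m * g"
begin

lemma pairing_second_coeff:
  assumes "w \<in> Vn n s" "A \<in> Rn n" "B \<in> Rn n" "(\<Sum>l<s. mat_vec s M w l * b l) = A * f + B * g"
  shows "\<exists>t\<in>Rn n. (\<Sum>l<s. w l * z l) + B = t * f"
proof (rule syzygy_second_coeff)
  have "(\<Sum>l<s. w l * mat_vec s M b l) = (\<Sum>l<s. w l * y l * f + w l * z l * g)"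
    by (rule sum.cong) (simp_all add: yz algebra_simps)
  then have "(\<Sum>l<s. w l * mat_vec s M b l) = (\<Sum>l<s. w l * y l) * f + (\<Sum>l<s. w l * z l) * g"
    by (simp add: sum.distrib sum_distrib_right)
  moreover have "(\<Sum>l<s. mat_vec s M w l * b l) = - (\<Sum>l<s. w l * mat_vec s M b l)"
    by (rule mat_vec_skew_pairing)
  ultimately show "((\<Sum>l<s. w l * y l) + A) * f + ((\<Sum>l<s. w l * z l) + B) * g = 0"
    using assms(4) by algebra
  have "y l \<in> Rn n" "z l \<in> Rn n" "w l \<in> Rn n" if "l < s" for l
    using yz[OF that] assms(1) that by (auto simp: Vn_def)
  then show "(\<Sum>l<s. w l * y l) + A \<in> Rn n" "(\<Sum>l<s. w l * z l) + B \<in> Rn n"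
    using assms(2,3) by (intro Rn_add Rn_sum Rn_mult; simp)+
qed

lemma coefficient_mod_fg:
  assumes "l < s" "c \<in> Rn n" "r * pfvec s M l - c * h \<in> ideal_gen n {f, g}"
  obtains y' z' where "y' \<in> Rn n" "z' \<in> Rn n" "b l = c + y' * f + z' * g"
proof -
  have "b l - c \<in> ideal_gen n {f, g}"
    by (rule third_coeff_unique[of "r * pfvec s M l"]) (use b[OF assms(1)] assms(2,3) in auto)
  then obtain y' z' where "y' \<in> Rn n" "z' \<in> Rn n" "b l - c = y' * f + z' * g"
    by (auto simp: ideal_gen_pair)
  moreover from this(3) have "b l = c + y' * f + z' * g"
    by (simp add: diff_eq_eq algebra_simps)
  ultimately show ?thesis
    using that by blast
qed

lemma pair_syzygy_relations:
  obtains zi zj zk t12 t13 t23 where "zj \<in> Rn n" "zk \<in> Rn n" "t12 \<in> Rn n" "t13 \<in> Rn n" "t23 \<in> Rn n"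
    "(\<Sum>l<s. pair_syzygy s M i j l * z l) + (-1)^i * g * zi = t12 * f"
    "(\<Sum>l<s. pair_syzygy s M i k l * z l) + (-1)^i * h * zi = t13 * f"
    "(\<Sum>l<s. pair_syzygy s M j k l * z l) + ((-1)^j * h * zj - r - (-1)^k * g * zk) = t23 * f"
proof -
  let ?W = "pair_syzygy s M"
  have gens: "f \<in> Rn n" "g \<in> Rn n" "h \<in> Rn n" by (fact generators_Rn)+
  obtain yi zi where i: "yi \<in> Rn n" "zi \<in> Rn n" "b i = 0 + yi * f + zi * g"
    by (rule coefficient_mod_fg[of i 0])
       (use indices r_Rn in \<open>simp_all add: pfvec_indices mult.assoc[symmetric] ideal_gen_mult_base\<close>)
  obtain yj zj where j: "yj \<in> Rn n" "zj \<in> Rn n" "b j = 0 + yj * f + zj * g"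
    by (rule coefficient_mod_fg[of j 0])
       (use indices r_Rn in \<open>simp_all add: pfvec_indices mult.assoc[symmetric] ideal_gen_mult_base\<close>)
  obtain yk zk where k: "yk \<in> Rn n" "zk \<in> Rn n" "b k = (-1)^k * r + yk * f + zk * g"
    by (rule coefficient_mod_fg[of k "(-1)^k * r"])
       (use indices r_Rn in \<open>simp_all add: pfvec_indices ideal_gen_zero ac_simps\<close>)
  have "\<exists>t\<in>Rn n. (\<Sum>l<s. ?W i j l * z l) + (-1)^i * g * zi = t * f"
  proof (rule pairing_second_coeff[OF pair_syzygy_Vn])
    show "(\<Sum>l<s. mat_vec s M (?W i j) l * b l)
        = ((-1)^i * g * yi - (-1)^j * b j) * f + ((-1)^i * g * zi) * g"
      using indices i(3) by (subst pairing_pair_syzygy) (simp_all add: algebra_simps)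
  qed (use i b indices gens in auto)
  moreover have "\<exists>t\<in>Rn n. (\<Sum>l<s. ?W i k l * z l) + (-1)^i * h * zi = t * f"
  proof (rule pairing_second_coeff[OF pair_syzygy_Vn])
    show "(\<Sum>l<s. mat_vec s M (?W i k) l * b l)
        = ((-1)^i * h * yi - (-1)^k * b k) * f + ((-1)^i * h * zi) * g"
      using indices i(3) by (subst pairing_pair_syzygy) (simp_all add: algebra_simps)
  qed (use i b indices gens in auto)
  moreover have "\<exists>t\<in>Rn n. (\<Sum>l<s. ?W j k l * z l) + ((-1)^j * h * zj - r - (-1)^k * g * zk) = t * f"
  proof (rule pairing_second_coeff[OF pair_syzygy_Vn])
    show "(\<Sum>l<s. mat_vec s M (?W j k) l * b l)
        = ((-1)^j * h * yj - (-1)^k * g * yk) * f + ((-1)^j * h * zj - r - (-1)^k * g * zk) * g"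
      using indices j(3) k(3) by (subst pairing_pair_syzygy) (simp_all add: algebra_simps)
  qed (use j k r_Rn indices gens in auto)
  ultimately show ?thesis
    using that j(2) k(2) by blast
qed

lemma colon_element_in_link: "r \<in> ideal_gen n {f, g, h, u}"
proof -
  let ?Z = "\<lambda>w. \<Sum>l<s. w l * z l" and ?W = "pair_syzygy s M"
  obtain zi zj zk t12 t13 t23 where
    Rn: "zj \<in> Rn n" "zk \<in> Rn n" "t12 \<in> Rn n" "t13 \<in> Rn n" "t23 \<in> Rn n" and
    t12: "?Z (?W i j) + (-1)^i * g * zi = t12 * f" and
    t13: "?Z (?W i k) + (-1)^i * h * zi = t13 * f" and
    t23: "?Z (?W j k) + ((-1)^j * h * zj - r - (-1)^k * g * zk) = t23 * f"
    by (rule pair_syzygy_relations)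
  obtain t where t: "t \<in> Rn n" "?Z (pfvec s M) = t * f"
    using pairing_second_coeff[OF pfvec_Vn, of 0 0] by (auto simp: mat_vec_pfvec)
  obtain e where e: "e \<in> {1, -1}"
    "\<And>l. h * ?W i j l - g * ?W i k l + f * ?W j k l = e * u * pfvec s M l"
    using Koszul_combination_pair_syzygies by blast
  have "h * ?Z (?W i j) - g * ?Z (?W i k) + f * ?Z (?W j k)
      = (\<Sum>l<s. (h * ?W i j l - g * ?W i k l + f * ?W j k l) * z l)"
    by (rule sum_lincomb[symmetric])
  also have "\<dots> = e * u * ?Z (pfvec s M)"
    by (simp add: e(2) sum_distrib_left mult.assoc)
  finally have Z_comb: "h * ?Z (?W i j) - g * ?Z (?W i k) + f * ?Z (?W j k) = e * u * ?Z (pfvec s M)" .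
  define X where "X = h * t12 - g * t13 + f * t23 + r - (-1)^j * h * zj + (-1)^k * g * zk - e * u * t"
  have "f * X = (h * ?Z (?W i j) - g * ?Z (?W i k) + f * ?Z (?W j k) - e * u * ?Z (pfvec s M))
      + e * u * (?Z (pfvec s M) - t * f)
      - h * (?Z (?W i j) + (-1)^i * g * zi - t12 * f)
      + g * (?Z (?W i k) + (-1)^i * h * zi - t13 * f)
      - f * (?Z (?W j k) + ((-1)^j * h * zj - r - (-1)^k * g * zk) - t23 * f)"
    unfolding X_def by (simp add: algebra_simps)
  then have "X = 0"
    using Z_comb t(2) t12 t13 t23 first_nonzero by simp
  moreover have "r = (- t23) * f + (t13 - (-1)^k * zk) * g + ((-1)^j * zj - t12) * h + (e * t) * u + X"
    unfolding X_def by (simp add: algebra_simps)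
  ultimately have "r = (- t23) * f + (t13 - (-1)^k * zk) * g + ((-1)^j * zj - t12) * h + (e * t) * u"
    by simp
  then show ?thesis
    using t(1) Rn e(1) by (simp only:) (intro ideal_gen_add ideal_gen_mult_base; auto)
qed

end

lemma colon_coefficients:
  assumes "r \<in> colon n (ideal_gen n {f, g, h}) I"
  obtains b where "\<And>l. l < s \<Longrightarrow> b l \<in> Rn n \<and> r * pfvec s M l - b l * h \<in> ideal_gen n {f, g}"
proof -
  have "\<exists>x\<in>Rn n. r * pfvec s M l - x * h \<in> ideal_gen n {f, g}" if "l < s" for l
  proof -
    have "r * pfvec s M l \<in> ideal_gen n (insert h {f, g})"
      using assms pfvec_in_ideal[OF that] by (simp add: colon_def insert_commute)
    then obtain x q where "x \<in> Rn n" "q \<in> ideal_gen n {f, g}" "r * pfvec s M l = x * h + q"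
      unfolding ideal_gen_insert[of n h "{f, g}"] by blast
    then show ?thesis by (intro bexI[of _ x]) simp_all
  qed
  then show ?thesis using that by metis
qed

lemma mat_vec_coefficients_mod_fg:
  assumes "r \<in> Rn n"
    and "\<And>l. l < s \<Longrightarrow> b l \<in> Rn n \<and> r * pfvec s M l - b l * h \<in> ideal_gen n {f, g}"
  shows "mat_vec s M b m \<in> ideal_gen n {f, g}"
proof (cases "m < s")
  case False
  then show ?thesis by (simp add: mat_vec_def ideal_gen_zero)
next
  case True
  have "mat_vec s M b m * h
      = - (\<Sum>l<s. M m l * (r * pfvec s M l - b l * h)) + r * mat_vec s M (pfvec s M) m"
    using True
    by (simp add: mat_vec_def sum_distrib_left sum_distrib_right sum_subtractf algebra_simps)
  also have "\<dots> \<in> ideal_gen n {f, g}"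
    using True assms(2) entry_Rn generators_Rn
    by (auto simp: mat_vec_pfvec
        intro!: ideal_gen_uminus is_ideal_sum[OF is_ideal_ideal_gen] ideal_gen_mult)
  finally have product: "mat_vec s M b m * h \<in> ideal_gen n {f, g}" .
  have "b l \<in> Rn n" if "l < s" for l
    using assms(2)[OF that] by blast
  then have "mat_vec s M b m \<in> Rn n"
    using True by (auto simp: mat_vec_def entry_Rn intro!: Rn_sum)
  with product show ?thesis
    using third_regular by blast
qed

lemma colon_subset: "colon n (ideal_gen n {f, g, h}) I \<subseteq> ideal_gen n {f, g, h, u}"
proof
  fix r assume r: "r \<in> colon n (ideal_gen n {f, g, h}) I"
  then have r_Rn: "r \<in> Rn n" by (simp add: colon_def)
  obtain b where b: "\<And>l. l < s \<Longrightarrow> b l \<in> Rn n \<and> r * pfvec s M l - b l * h \<in> ideal_gen n {f, g}"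
    using colon_coefficients[OF r] by blast
  have "\<forall>m<s. \<exists>y\<in>Rn n. \<exists>z\<in>Rn n. mat_vec s M b m = y * f + z * g"
    using mat_vec_coefficients_mod_fg[OF r_Rn b] by (simp add: ideal_gen_pair)
  then obtain y z
    where "\<And>m. m < s \<Longrightarrow> y m \<in> Rn n \<and> z m \<in> Rn n \<and> mat_vec s M b m = y m * f + z m * g"
    by metis
  then show "r \<in> ideal_gen n {f, g, h, u}"
    using colon_element_in_link r_Rn b by blast
qed

theorem colon_eq: "colon n (ideal_gen n {f, g, h}) I = ideal_gen n {f, g, h, u}"
  using colon_subset colon_superset by blast

end

theorem lemma6p4:
  fixes n s :: nat and I :: "'k::field mpoly set" and M :: "nat \<Rightarrow> nat \<Rightarrow> 'k mpoly"
    and i j k :: nat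
  assumes "gorenstein_ht3_BE n I s M"
    and "\<not> complete_intersection n I"
    and "i < s" "j < s" "k < s" "i \<noteq> j" "i \<noteq> k" "j \<noteq> k"
    and "regular_seq n [pf_del s M {i}, pf_del s M {j}, pf_del s M {k}]"
  shows "colon n (ideal_gen n {pf_del s M {i}, pf_del s M {j}, pf_del s M {k}}) I
       = ideal_gen n {pf_del s M {i}, pf_del s M {j}, pf_del s M {k}, pf_del s M {i, j, k}}"
proof -
  have "pfaffian_ideal n s M I"
    using assms(1) by (intro pfaffian_ideal_of_BE_matrix) (simp add: gorenstein_ht3_BE_def)
  then interpret pfaffian_link n s M I i j k
    using assms(3-9) by (intro pfaffian_link.intro pfaffian_link_axioms.intro)
  show ?thesis by (rule colon_eq)
qed

end
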